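(* Let $g_1,g_2$ be monic divisors of $x^m-1$ over $\mathbb{F}_{q^2}$ and $v\in\mathcal{R}$ with $\gcd(v^2-1,x^m-1)=1$, and let $\mathcal{D}_3$ be the QC code of length $2m$ over $\mathbb{F}_{q^2}$ generated by $(g_1,vg_1)$ and $(vg_2,g_2)$. Then $\mathcal{D}_3$ is Hermitian dual-containing iff $g_1\mid g_1^{\perp_H}(1+v\overline{v}^{[q]})$, $g_1\mid g_2^{\perp_H}(\overline{v}^{[q]}+v)$ and $g_2\mid g_2^{\perp_H}(1+v\overline{v}^{[q]})$.
   Context: $q$ a prime power; $\mathcal{R}=\mathbb{F}_{q^2}[x]/(x^m-1)$, elements identified with representatives of degree $<m$; $[k]=(k_0,\dots,k_{m-1})$; $\overline{k}(x)=k(x^{-1})\bmod(x^m-1)$; $k^{[q]}=\sum k_i^qx^i$; $f^*(x)=x^{\deg f}f(1/x)$; for $k\in\mathcal{R}$, $f=\frac{x^m-1}{\gcd(k,x^m-1)}$, $k^{\perp}=f(0)^{-1}f^*$, $k^{\perp_H}=(k^{[q]})^{\perp}$. "$g\mid a$" for $g\mid x^m-1$ means $g$ divides the representative of $a$. The QC code generated by $(u_{i1},u_{i2})$, $i=1,2$, is $\{([r_1u_{11}+r_2u_{21}],[r_1u_{12}+r_2u_{22}]):r_i\in\mathcal{R}\}$. Hermitian inner product $\sum u_i^qv_i$; dual-containing means $\mathcal{D}_3^{\perp_H}\subseteq\mathcal{D}_3$. *)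

theory Defs
  imports "HOL-Computational_Algebra.Computational_Algebra"
begin

definition xm1 :: "nat \<Rightarrow> 'a::field_gcd poly" where
  "xm1 m = monom 1 m - 1"

definition rmod :: "nat \<Rightarrow> 'a::field_gcd poly \<Rightarrow> 'a poly" where
  "rmod m p = p mod xm1 m"

definition cvec :: "nat \<Rightarrow> 'a::field_gcd poly \<Rightarrow> 'a list" where
  "cvec m p = map (\<lambda>i. coeff (rmod m p) i) [0..<m]"

text \<open>bar k (x) = k(x^{-1}) mod (x^m - 1).\<close>
definition conjrev :: "nat \<Rightarrow> 'a::field_gcd poly \<Rightarrow> 'a poly" where
  "conjrev m k = (\<Sum>i<m. monom (coeff (rmod m k) i) ((m - i) mod m))"

definition frob :: "nat \<Rightarrow> nat \<Rightarrow> 'a::field_gcd poly \<Rightarrow> 'a poly" where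
  "frob q m k = map_poly (\<lambda>c. c ^ q) (rmod m k)"

definition perp :: "nat \<Rightarrow> 'a::field_gcd poly \<Rightarrow> 'a poly" where
  "perp m k = (let f = xm1 m div gcd (rmod m k) (xm1 m)
               in smult (inverse (coeff f 0)) (reflect_poly f))"

definition perpH :: "nat \<Rightarrow> nat \<Rightarrow> 'a::field_gcd poly \<Rightarrow> 'a poly" where
  "perpH q m k = perp m (frob q m k)"

definition qc_code :: "nat \<Rightarrow> 'a::field_gcd poly \<Rightarrow> 'a poly \<Rightarrow> 'a poly \<Rightarrow> 'a poly \<Rightarrow> 'a list set" where
  "qc_code m u11 u12 u21 u22 =
     {cvec m (r1 * u11 + r2 * u21) @ cvec m (r1 * u12 + r2 * u22) | r1 r2. True}"

definition herm_ip :: "nat \<Rightarrow> 'a::field_gcd list \<Rightarrow> 'a list \<Rightarrow> 'a" where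
  "herm_ip q u v = (\<Sum>i<length u. (u ! i) ^ q * (v ! i))"

definition herm_dual :: "nat \<Rightarrow> nat \<Rightarrow> 'a::field_gcd list set \<Rightarrow> 'a list set" where
  "herm_dual q n C = {u. length u = n \<and> (\<forall>c\<in>C. herm_ip q u c = 0)}"

definition prime_power :: "nat \<Rightarrow> bool" where
  "prime_power q = (\<exists>p k. prime p \<and> k > 0 \<and> q = p ^ k)"

end

theory Submission
  imports Defs "HOL-Number_Theory.Cong"
begin

text \<open>
  Work in \<open>R = F[x]/(x^m - 1)\<close> and write \<open>a\<^sup>*\<close> for the Hermitian conjugate
  \<open>bar (a\<^sup>[q])\<close>, a ring involution of \<open>R\<close>. The Hermitian inner product of two
  coefficient vectors is the constant term of \<open>a\<^sup>* b\<close>, and this pairing is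
  nondegenerate. Hence, with \<open>h\<^sub>i = (x^m - 1) / g\<^sub>i\<close>, a pair \<open>(a\<^sub>1, a\<^sub>2)\<close> lies
  in the Hermitian dual of \<open>D\<^sub>3\<close> iff \<open>h\<^sub>1\<close> divides \<open>a\<^sub>1\<^sup>* + v a\<^sub>2\<^sup>*\<close> and
  \<open>h\<^sub>2\<close> divides \<open>v a\<^sub>1\<^sup>* + a\<^sub>2\<^sup>*\<close>, while, since \<open>1 - v\<^sup>2\<close> is a unit,
  \<open>(b\<^sub>1, b\<^sub>2)\<close> lies in \<open>D\<^sub>3\<close> iff \<open>g\<^sub>1 | b\<^sub>1 - v b\<^sub>2\<close> and \<open>g\<^sub>2 | b\<^sub>2 - v b\<^sub>1\<close>.
  Conjugating the dual conditions and inverting \<open>1 - w\<^sup>2\<close>, \<open>w = v\<^sup>*\<close>, shows that the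
  dual is generated by two explicit pairs, so containment amounts to four divisibilities
  \<open>g\<^sub>i | h\<^sub>j\<^sup>* e\<close>. Two of them are equivalent because \<open>w + v\<close> is self-conjugate,
  and \<open>g\<^sup>\<perp>\<^sup>H\<close> is a unit multiple of \<open>h\<^sup>*\<close> modulo \<open>x^m - 1\<close>, which turns the
  remaining three into the stated conditions.
\<close>

section \<open>Arithmetic modulo \<open>x^m - 1\<close>\<close>

lemma cong_dvd_iff_of_dvd_modulus:
  fixes a b n d :: "'a::unique_euclidean_ring"
  assumes "[a = b] (mod n)" and "d dvd n"
  shows "d dvd a \<longleftrightarrow> d dvd b"
  using cong_dvd_iff[OF cong_dvd_modulus[OF assms]] .

lemma dvd_mult_cancel_cong_unit:
  fixes u k a n d :: "'a::unique_euclidean_ring"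
  assumes "[u * k = 1] (mod n)" and "d dvd n"
  shows "d dvd k * a \<longleftrightarrow> d dvd a"
proof
  assume "d dvd k * a"
  then have "d dvd u * k * a" by (simp add: mult.assoc)
  moreover have "[u * k * a = a] (mod n)" using cong_scalar_right[OF assms(1), of a] by simp
  ultimately show "d dvd a" using cong_dvd_iff_of_dvd_modulus assms(2) by blast
qed simp

lemma cong_inverse_of_gcd_eq_1:
  fixes a n :: "'a::{euclidean_ring_gcd, unique_euclidean_ring}"
  assumes "gcd a n = 1"
  obtains b where "[b * a = 1] (mod n)"
proof
  show "[fst (bezout_coefficients a n) * a = 1] (mod n)"
    using bezout_coefficients_fst_snd[of a n] assms
    by (metis cong_iff_lin add_diff_cancel_left' diff_add_cancel mult.commute)
qed

lemma cong_pcompose_right: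
  "[r = r'] (mod n) \<Longrightarrow> [pcompose p r = pcompose p r'] (mod n :: 'a::field_gcd poly)"
  by (induction p) (simp_all add: pcompose_pCons cong_add cong_mult)

lemma cong_smult: "[p = r] (mod n) \<Longrightarrow> [smult c p = smult c r] (mod n :: 'a::field_gcd poly)"
  by (simp add: cong_iff_dvd_diff dvd_smult flip: smult_diff_right)

lemma degree_xm1: "m > 0 \<Longrightarrow> degree (xm1 m :: 'a::field_gcd poly) = m"
  unfolding xm1_def diff_conv_add_uminus
  by (subst degree_add_eq_left) (simp_all add: degree_monom_eq)

lemma xm1_nonzero: "m > 0 \<Longrightarrow> xm1 m \<noteq> (0 :: 'a::field_gcd poly)"
  by (metis degree_0 degree_xm1 less_irrefl)

lemma coeff_0_xm1: "m > 0 \<Longrightarrow> coeff (xm1 m :: 'a::field_gcd poly) 0 = -1"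
  by (simp add: xm1_def coeff_monom)

lemma degree_mod_xm1_less: "m > 0 \<Longrightarrow> degree (p mod xm1 m :: 'a::field_gcd poly) < m"
  by (metis degree_0 degree_mod_less degree_xm1 xm1_nonzero)

lemma coeff_mod_xm1_eq_0: "m > 0 \<Longrightarrow> m \<le> i \<Longrightarrow> coeff (p mod xm1 m :: 'a::field_gcd poly) i = 0"
  using degree_mod_xm1_less[of m p] by (intro coeff_eq_0) simp

lemma mod_xm1_eq_self: "m > 0 \<Longrightarrow> degree p < m \<Longrightarrow> p mod xm1 m = (p :: 'a::field_gcd poly)"
  by (rule mod_poly_less) (simp add: degree_xm1)

lemma sum_monom_coeff_lessThan:
  "degree p < m \<Longrightarrow> (\<Sum>i<m. monom (coeff p i) i) = p"
  by (rule poly_eqI) (simp add: coeff_sum coeff_monom coeff_eq_0 not_less)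

lemma xm1_dvd_monom_mult_minus_1: "xm1 m dvd (monom 1 (m * t) - 1 :: 'a::field_gcd poly)"
proof -
  have "(monom 1 m :: 'a poly) ^ t - 1 = (monom 1 m - 1) * (\<Sum>i<t. monom 1 m ^ i)"
    by (rule power_diff_1_eq)
  moreover have "(monom 1 m :: 'a poly) ^ t = monom 1 (m * t)" by (simp add: monom_power)
  ultimately show ?thesis unfolding xm1_def by (metis dvd_triv_left)
qed

lemma cong_monom_mod_xm1: "[monom c n = monom c (n mod m)] (mod xm1 m :: 'a::field_gcd poly)"
proof -
  have "monom c n = monom c (n mod m) * (monom 1 (m * (n div m)) :: 'a poly)"
    by (simp add: mult_monom)
  then have "monom c n - monom c (n mod m) = monom c (n mod m) * (monom 1 (m * (n div m)) - 1 :: 'a poly)"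
    by (simp add: right_diff_distrib)
  then show ?thesis
    by (simp add: cong_iff_dvd_diff xm1_dvd_monom_mult_minus_1)
qed

lemma cong_monom_xm1:
  "n mod m = n' mod m \<Longrightarrow> [monom c n = monom c n'] (mod xm1 m :: 'a::field_gcd poly)"
  by (metis cong_monom_mod_xm1 cong_sym cong_trans)

lemma monom_inverse_cong:
  assumes "m > 0"
  shows "[monom 1 (d * (m - 1)) * monom 1 d = (1 :: 'a::field_gcd poly)] (mod xm1 m)"
proof -
  have "d * (m - 1) + d = m * d"
    using assms by (cases m) (simp_all add: algebra_simps)
  then show ?thesis
    using xm1_dvd_monom_mult_minus_1[of m d] by (simp add: mult_monom cong_iff_dvd_diff)
qed

lemma mod_add_mult_pred:
  fixes d i m :: nat
  assumes "i \<le> d" and "m > 0"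
  shows "(d + i * (m - 1)) mod m = (d - i) mod m"
proof -
  have "d + i * (m - 1) = (d - i) + i * m"
    using assms by (simp add: diff_mult_distrib2)
  then show ?thesis by simp
qed

section \<open>The involution \<open>x \<mapsto> x\<^sup>-\<^sup>1\<close>\<close>

text \<open>Substituting \<open>x^(m-1)\<close> for \<open>x\<close> realises \<open>k(x\<^sup>-\<^sup>1)\<close> as a ring endomorphism of
  \<open>F[x]\<close>, since \<open>x^(m-1)\<close> is the inverse of \<open>x\<close> modulo \<open>x^m - 1\<close>.\<close>

definition bar :: "nat \<Rightarrow> 'a::comm_semiring_1 poly \<Rightarrow> 'a poly" where
  "bar m p = pcompose p (monom 1 (m - 1))"

lemma pcompose_monom: "pcompose (monom c n) r = smult c (r ^ n)"
  by (induction n) (simp_all add: monom_0 monom_Suc pcompose_pCons)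

lemma bar_add: "bar m (p + r) = bar m p + bar m r"
  by (simp add: bar_def pcompose_add)

lemma bar_diff: "bar m (p - r) = bar m p - (bar m r :: 'a::comm_ring_1 poly)"
  by (simp add: bar_def pcompose_diff)

lemma bar_mult: "bar m (p * r) = bar m p * bar m r"
  by (simp add: bar_def pcompose_mult)

lemma bar_1 [simp]: "bar m 1 = 1"
  by (simp add: bar_def pcompose_1)

lemma bar_sum: "bar m (sum f A) = (\<Sum>i\<in>A. bar m (f i))"
  by (simp add: bar_def pcompose_sum)

lemma bar_monom: "bar m (monom c n) = monom c (n * (m - 1))"
  by (simp add: bar_def pcompose_monom monom_power smult_monom mult.commute)

lemma cong_bar:
  assumes "[p = r] (mod xm1 m)"
  shows "[bar m p = bar m r] (mod xm1 m :: 'a::field_gcd poly)"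
proof -
  obtain t where "p - r = xm1 m * t"
    using assms by (auto simp: cong_iff_dvd_diff)
  then have "bar m p - bar m r = bar m (xm1 m) * bar m t"
    by (metis bar_diff bar_mult)
  moreover have "bar m (xm1 m) = monom 1 (m * (m - 1)) - (1 :: 'a poly)"
    by (simp add: xm1_def bar_diff bar_monom mult.commute)
  ultimately show ?thesis
    by (simp add: cong_iff_dvd_diff xm1_dvd_monom_mult_minus_1)
qed

lemma bar_bar_cong:
  assumes "m > 0"
  shows "[bar m (bar m p) = p] (mod xm1 m :: 'a::field_gcd poly)"
proof -
  have "bar m (bar m p) = pcompose p (monom 1 ((m - 1) * (m - 1)))"
    by (simp add: bar_def pcompose_monom monom_power flip: pcompose_assoc)
  moreover have "[monom 1 ((m - 1) * (m - 1)) = (monom 1 1 :: 'a poly)] (mod xm1 m)"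
    using mod_add_mult_pred[of "m - 1" m m] assms by (intro cong_monom_xm1) simp
  ultimately have "[bar m (bar m p) = pcompose p (monom 1 1)] (mod xm1 m)"
    by (simp add: cong_pcompose_right)
  moreover have "monom 1 1 = [:0, 1 :: 'a:]"
    by (simp add: monom_Suc monom_0)
  ultimately show ?thesis by simp
qed

lemma conjrev_cong_bar:
  assumes "m > 0"
  shows "[conjrev m k = bar m k] (mod xm1 m :: 'a::field_gcd poly)"
proof -
  let ?r = "rmod m k"
  have "bar m ?r = bar m (\<Sum>i<m. monom (coeff ?r i) i)"
    using sum_monom_coeff_lessThan[of ?r m] degree_mod_xm1_less[OF assms, of k]
    by (simp add: rmod_def)
  also have "\<dots> = (\<Sum>i<m. monom (coeff ?r i) (i * (m - 1)))"
    by (simp add: bar_sum bar_monom)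
  moreover have "[\<dots> = conjrev m k] (mod xm1 m)"
    unfolding conjrev_def
    using mod_add_mult_pred[of _ m m] assms by (intro cong_sum cong_monom_xm1) simp
  moreover have "[bar m k = bar m ?r] (mod xm1 m)"
    by (rule cong_bar) (simp add: rmod_def cong_sym)
  ultimately show ?thesis
    by (metis cong_sym cong_trans)
qed

lemma reflect_poly_as_sum:
  "reflect_poly f = (\<Sum>i\<le>degree f. monom (coeff f i) (degree f - i))"
proof (rule poly_eqI)
  fix n
  have "coeff (\<Sum>i\<le>degree f. monom (coeff f i) (degree f - i)) n
      = (\<Sum>i\<le>degree f. if i = degree f - n \<and> n \<le> degree f then coeff f i else 0)"
    unfolding coeff_sum coeff_monom by (rule sum.cong) auto
  then show "coeff (reflect_poly f) n = coeff (\<Sum>i\<le>degree f. monom (coeff f i) (degree f - i)) n"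
    by (simp add: coeff_reflect_poly sum.delta not_less)
qed

lemma reflect_poly_cong_bar:
  assumes "m > 0"
  shows "[reflect_poly f = monom 1 (degree f) * bar m f] (mod xm1 m :: 'a::field_gcd poly)"
proof -
  have "monom 1 (degree f) * bar m f
      = (\<Sum>i\<le>degree f. monom (coeff f i) (degree f + i * (m - 1)))"
    by (subst (2) poly_as_sum_of_monoms[symmetric])
      (simp only: bar_sum bar_monom sum_distrib_left mult_monom mult_1)
  moreover have "[reflect_poly f = \<dots>] (mod xm1 m)"
    unfolding reflect_poly_as_sum
    using mod_add_mult_pred assms by (intro cong_sum cong_monom_xm1) simp
  ultimately show ?thesis by simp
qed

section \<open>The constant-term pairing\<close>

definition const_term :: "nat \<Rightarrow> 'a::field_gcd poly \<Rightarrow> 'a" where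
  "const_term m p = coeff (p mod xm1 m) 0"

lemma const_term_cong: "[p = r] (mod xm1 m) \<Longrightarrow> const_term m p = const_term m r"
  by (simp add: const_term_def cong_def)

lemma const_term_0 [simp]: "const_term m 0 = 0"
  by (simp add: const_term_def)

lemma const_term_add: "const_term m (p + r) = const_term m p + const_term m r"
  by (simp add: const_term_def poly_mod_add_left)

lemma const_term_sum: "const_term m (sum f A) = (\<Sum>i\<in>A. const_term m (f i))"
  by (induction A rule: infinite_finite_induct) (simp_all add: const_term_add)

lemma const_term_monom:
  assumes "m > 0"
  shows "const_term m (monom c e) = (if m dvd e then c else 0)"
proof -
  have "degree (monom c (e mod m)) < m"
    using assms degree_monom_le[of c "e mod m"] by (meson le_less_trans mod_less_divisor)
  then have "const_term m (monom c (e mod m)) = coeff (monom c (e mod m)) 0"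
    by (simp add: const_term_def mod_xm1_eq_self assms)
  moreover have "const_term m (monom c e) = const_term m (monom c (e mod m))"
    by (rule const_term_cong[OF cong_monom_mod_xm1])
  ultimately show ?thesis
    by (simp add: coeff_monom dvd_eq_mod_eq_0)
qed

lemma dvd_add_diff_iff_eq:
  fixes i j m :: nat
  assumes "i < m" and "j < m"
  shows "m dvd j + (m - i) \<longleftrightarrow> j = i"
proof
  assume dvd: "m dvd j + (m - i)"
  show "j = i"
  proof (cases "i \<le> j")
    case True
    then have "j + (m - i) = (j - i) + m"
      using assms by simp
    then have "m dvd j - i"
      using dvd by simp
    then show ?thesis
      using True assms nat_dvd_not_less[of "j - i" m] by linarith
  next
    case False
    then show ?thesis
      using dvd assms nat_dvd_not_less[of "j + (m - i)" m] by linarith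
  qed
qed (use assms in simp)

lemma const_term_monom_mult:
  assumes "i < m"
  shows "const_term m (monom c (m - i) * b) = c * coeff (b mod xm1 m) i"
proof -
  let ?r = "b mod xm1 m"
  have m: "m > 0" using assms by simp
  have "const_term m (monom c (m - i) * b) = const_term m (monom c (m - i) * ?r)"
    by (intro const_term_cong cong_scalar_left) simp
  also have "monom c (m - i) * ?r = (\<Sum>j<m. monom (c * coeff ?r j) (j + (m - i)))"
    by (subst (1) sum_monom_coeff_lessThan[OF degree_mod_xm1_less[OF m], symmetric])
      (simp add: sum_distrib_left mult_monom add.commute)
  also have "const_term m \<dots> = (\<Sum>j<m. if j = i then c * coeff ?r j else 0)"
    unfolding const_term_sum const_term_monom[OF m]
    by (intro sum.cong refl) (simp add: dvd_add_diff_iff_eq[OF assms])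
  also have "\<dots> = c * coeff ?r i"
    using assms by simp
  finally show ?thesis .
qed

lemma const_term_conjrev_mult:
  assumes "m > 0"
  shows "const_term m (conjrev m s * b) = (\<Sum>i<m. coeff (rmod m s) i * coeff (b mod xm1 m) i)"
proof -
  have "[conjrev m s * b = (\<Sum>i<m. monom (coeff (rmod m s) i) (m - i) * b)] (mod xm1 m)"
    unfolding conjrev_def sum_distrib_right
    by (intro cong_sum cong_scalar_right cong_monom_xm1) simp
  then show ?thesis
    by (simp add: const_term_cong[of _ _ m] const_term_sum const_term_monom_mult)
qed

lemma xm1_dvd_iff_const_term:
  assumes "m > 0"
  shows "xm1 m dvd P \<longleftrightarrow> (\<forall>r. const_term m (r * P) = 0)"
proof
  assume "xm1 m dvd P"
  then show "\<forall>r. const_term m (r * P) = 0"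
    by (simp add: const_term_def)
next
  assume vanish: "\<forall>r. const_term m (r * P) = 0"
  have "coeff (P mod xm1 m) i = 0" for i
  proof (cases "i < m")
    case True
    then show ?thesis
      using vanish const_term_monom_mult[OF True, of 1 P] by simp
  qed (simp add: coeff_mod_xm1_eq_0 assms)
  then show "xm1 m dvd P"
    by (simp add: poly_eq_iff flip: mod_eq_0_iff_dvd)
qed

section \<open>Coefficient vectors and the code\<close>

lemma length_cvec [simp]: "length (cvec m p) = m"
  by (simp add: cvec_def)

lemma nth_cvec: "i < m \<Longrightarrow> cvec m p ! i = coeff (p mod xm1 m) i"
  by (simp add: cvec_def rmod_def)

lemma cvec_eq_iff_cong:
  assumes "m > 0"
  shows "cvec m p = cvec m r \<longleftrightarrow> [p = r] (mod xm1 m :: 'a::field_gcd poly)"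
proof
  assume eq: "cvec m p = cvec m r"
  have "coeff (p mod xm1 m) i = coeff (r mod xm1 m) i" for i
  proof (cases "i < m")
    case True
    then show ?thesis using arg_cong[OF eq, of "\<lambda>xs. xs ! i"] by (simp add: nth_cvec)
  qed (simp add: coeff_mod_xm1_eq_0 assms)
  then show "[p = r] (mod xm1 m)"
    by (simp add: cong_def poly_eq_iff)
qed (simp add: cong_def cvec_def rmod_def)

lemma cvec_Poly:
  assumes "m > 0" and "length xs = m"
  shows "cvec m (Poly xs :: 'a::field_gcd poly) = xs"
proof (rule nth_equalityI)
  have "degree (Poly xs :: 'a poly) \<le> m - 1"
    by (rule degree_le) (auto simp: assms nth_default_def)
  then have "degree (Poly xs :: 'a poly) < m"
    using assms(1) by linarith
  then show "cvec m (Poly xs :: 'a poly) ! i = xs ! i" if "i < length (cvec m (Poly xs))" for i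
    using that assms by (simp add: nth_cvec mod_xm1_eq_self nth_default_nth)
qed (simp add: assms)

lemma herm_ip_append:
  assumes "length xs1 = length ys1"
  shows "herm_ip q (xs1 @ xs2) (ys1 @ ys2) = herm_ip q xs1 ys1 + herm_ip q xs2 ys2"
proof -
  let ?n = "length xs1" and ?f = "\<lambda>i. ((xs1 @ xs2) ! i) ^ q * ((ys1 @ ys2) ! i)"
  have "herm_ip q (xs1 @ xs2) (ys1 @ ys2) = sum ?f {0..<?n} + sum ?f {?n..<?n + length xs2}"
    by (simp add: herm_ip_def atLeast0LessThan[symmetric] sum.atLeastLessThan_concat)
  also have "sum ?f {0..<?n} = herm_ip q xs1 ys1"
    using assms by (simp add: herm_ip_def atLeast0LessThan nth_append)
  also have "sum ?f {?n..<?n + length xs2} = herm_ip q xs2 ys2"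
    using sum.shift_bounds_nat_ivl[of ?f 0 ?n "length xs2"] assms
    by (simp add: herm_ip_def atLeast0LessThan nth_append add.commute)
  finally show ?thesis .
qed

definition code_pair :: "'a::field_gcd poly \<Rightarrow> 'a poly \<Rightarrow> 'a poly \<Rightarrow> 'a poly \<Rightarrow> 'a poly \<Rightarrow> bool" where
  "code_pair g1 g2 v b1 b2 \<longleftrightarrow> g1 dvd b1 - v * b2 \<and> g2 dvd b2 - v * b1"

lemma code_pair_cong:
  assumes "g1 dvd xm1 m" and "g2 dvd xm1 m"
    and "[b1 = b1'] (mod xm1 m)" and "[b2 = b2'] (mod xm1 m)"
  shows "code_pair g1 g2 v b1 b2 \<longleftrightarrow> code_pair g1 g2 v b1' b2'"
proof -
  have "[b1 - v * b2 = b1' - v * b2'] (mod xm1 m)" "[b2 - v * b1 = b2' - v * b1'] (mod xm1 m)"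
    using assms(3,4) by (simp_all add: cong_diff cong_scalar_left)
  then show ?thesis
    unfolding code_pair_def using assms(1,2) cong_dvd_iff_of_dvd_modulus by blast
qed

lemma code_pair_lincomb:
  assumes "code_pair g1 g2 v x1 x2" and "code_pair g1 g2 v y1 y2"
  shows "code_pair g1 g2 v (\<alpha> * x1 + \<beta> * y1) (\<alpha> * x2 + \<beta> * y2)"
proof -
  have "(\<alpha> * x1 + \<beta> * y1) - v * (\<alpha> * x2 + \<beta> * y2) = \<alpha> * (x1 - v * x2) + \<beta> * (y1 - v * y2)"
    "(\<alpha> * x2 + \<beta> * y2) - v * (\<alpha> * x1 + \<beta> * y1) = \<alpha> * (x2 - v * x1) + \<beta> * (y2 - v * y1)"
    by (simp_all add: algebra_simps)
  then show ?thesis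
    using assms by (simp add: code_pair_def)
qed

lemma qc_code_member_iff:
  assumes m: "m > 0" and inverse: "[D * (1 - v * v) = 1] (mod xm1 m)"
    and g1: "g1 dvd xm1 m" and g2: "g2 dvd xm1 m"
  shows "cvec m b1 @ cvec m b2 \<in> qc_code m g1 (v * g1) (v * g2) g2 \<longleftrightarrow> code_pair g1 g2 v b1 b2"
proof -
  have "cvec m b1 @ cvec m b2 \<in> qc_code m g1 (v * g1) (v * g2) g2 \<longleftrightarrow>
      (\<exists>r1 r2. [b1 = r1 * g1 + r2 * (v * g2)] (mod xm1 m) \<and> [b2 = r1 * (v * g1) + r2 * g2] (mod xm1 m))"
    unfolding qc_code_def by (auto simp: cvec_eq_iff_cong[OF m])
  also have "\<dots> \<longleftrightarrow> code_pair g1 g2 v b1 b2"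
  proof
    assume "\<exists>r1 r2. [b1 = r1 * g1 + r2 * (v * g2)] (mod xm1 m) \<and> [b2 = r1 * (v * g1) + r2 * g2] (mod xm1 m)"
    then obtain r1 r2 where
      "[b1 = r1 * g1 + r2 * (v * g2)] (mod xm1 m)" "[b2 = r1 * (v * g1) + r2 * g2] (mod xm1 m)"
      by blast
    moreover have "code_pair g1 g2 v g1 (v * g1)" "code_pair g1 g2 v (v * g2) g2"
      by (simp_all add: code_pair_def right_diff_distrib)
    ultimately show "code_pair g1 g2 v b1 b2"
      using code_pair_lincomb code_pair_cong[OF g1 g2] by blast
  next
    assume "code_pair g1 g2 v b1 b2"
    then obtain t1 t2 where t: "b1 - v * b2 = g1 * t1" "b2 - v * b1 = g2 * t2"
      by (auto simp: code_pair_def elim!: dvdE)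
    have "(D * t1) * g1 + (D * t2) * (v * g2) = D * (b1 - v * b2) + D * v * (b2 - v * b1)"
      "(D * t1) * (v * g1) + (D * t2) * g2 = D * v * (b1 - v * b2) + D * (b2 - v * b1)"
      unfolding t by (simp_all add: algebra_simps)
    then have "(D * t1) * g1 + (D * t2) * (v * g2) = (D * (1 - v * v)) * b1"
      "(D * t1) * (v * g1) + (D * t2) * g2 = (D * (1 - v * v)) * b2"
      by (simp_all add: algebra_simps)
    moreover have "[b = (D * (1 - v * v)) * b] (mod xm1 m)" for b
      using cong_scalar_right[OF inverse, of b] by (simp add: cong_sym)
    ultimately show "\<exists>r1 r2. [b1 = r1 * g1 + r2 * (v * g2)] (mod xm1 m) \<and> [b2 = r1 * (v * g1) + r2 * g2] (mod xm1 m)"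
      by metis
  qed
  finally show ?thesis .
qed

section \<open>Hermitian conjugation\<close>

locale involutive_frobenius =
  fixes field_type :: "'a::field_gcd itself" and q :: nat
  assumes frobenius_add: "(x + y :: 'a) ^ q = x ^ q + y ^ q"
    and frobenius_involutive: "((x :: 'a) ^ q) ^ q = x"
begin

lemma exponent_pos: "q > 0"
  using frobenius_involutive[of 0] by (cases q) simp_all

lemma frobenius_diff: "(x - y :: 'a) ^ q = x ^ q - y ^ q"
  using frobenius_add[of "x - y" y] by (simp add: eq_diff_eq)

lemma frobenius_sum: "(sum f A :: 'a) ^ q = (\<Sum>i\<in>A. f i ^ q)"
  using exponent_pos by (induction A rule: infinite_finite_induct) (simp_all add: frobenius_add)

definition frob_poly :: "'a poly \<Rightarrow> 'a poly" where
  "frob_poly p = map_poly (\<lambda>c. c ^ q) p"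

lemma coeff_frob_poly [simp]: "coeff (frob_poly p) i = coeff p i ^ q"
  using exponent_pos by (simp add: frob_poly_def coeff_map_poly)

lemma frob_poly_0 [simp]: "frob_poly 0 = 0"
  by (simp add: frob_poly_def)

lemma frob_poly_1 [simp]: "frob_poly 1 = 1"
  by (simp add: frob_poly_def)

lemma frob_poly_add: "frob_poly (p + r) = frob_poly p + frob_poly r"
  by (rule poly_eqI) (simp add: frobenius_add)

lemma frob_poly_diff: "frob_poly (p - r) = frob_poly p - frob_poly r"
  by (rule poly_eqI) (simp add: frobenius_diff)

lemma frob_poly_mult: "frob_poly (p * r) = frob_poly p * frob_poly r"
  by (rule poly_eqI) (simp add: coeff_mult frobenius_sum power_mult_distrib)

lemma frob_poly_monom: "frob_poly (monom c n) = monom (c ^ q) n"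
  using exponent_pos by (simp add: frob_poly_def map_poly_monom)

lemma frob_poly_pCons: "frob_poly (pCons c p) = pCons (c ^ q) (frob_poly p)"
  using exponent_pos by (simp add: frob_poly_def map_poly_pCons)

lemma frob_poly_frob_poly [simp]: "frob_poly (frob_poly p) = p"
  by (rule poly_eqI) (simp add: frobenius_involutive)

lemma degree_frob_poly [simp]: "degree (frob_poly p) = degree p"
  using exponent_pos by (simp add: frob_poly_def degree_map_poly)

lemma frob_poly_xm1 [simp]: "frob_poly (xm1 m) = xm1 m"
  by (simp add: xm1_def frob_poly_diff frob_poly_monom)

lemma frob_poly_eq_0_iff [simp]: "frob_poly p = 0 \<longleftrightarrow> p = 0"
  by (metis frob_poly_0 frob_poly_frob_poly)

lemma frob_poly_dvd_iff [simp]: "frob_poly a dvd frob_poly b \<longleftrightarrow> a dvd b"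
  by (metis dvd_def frob_poly_frob_poly frob_poly_mult)

lemma frob_poly_pcompose: "frob_poly (pcompose p r) = pcompose (frob_poly p) (frob_poly r)"
  by (induction p) (simp_all add: pcompose_pCons frob_poly_pCons frob_poly_add frob_poly_mult)

lemma frob_poly_bar: "frob_poly (bar m p) = bar m (frob_poly p)"
  by (simp add: bar_def frob_poly_pcompose frob_poly_monom)

lemma cong_frob_poly: "[p = r] (mod xm1 m) \<Longrightarrow> [frob_poly p = frob_poly r] (mod xm1 m)"
  by (metis cong_iff_dvd_diff frob_poly_diff frob_poly_dvd_iff frob_poly_xm1)

lemma frob_poly_mod_xm1:
  assumes "m > 0"
  shows "frob_poly (p mod xm1 m) = frob_poly p mod xm1 m"
proof -
  have "frob_poly (p mod xm1 m) = frob_poly (p mod xm1 m) mod xm1 m"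
    by (simp add: mod_xm1_eq_self degree_mod_xm1_less assms)
  also have "\<dots> = frob_poly p mod xm1 m"
    using cong_frob_poly[of "p mod xm1 m" p m] by (simp add: cong_def)
  finally show ?thesis .
qed

lemma frob_eq_frob_poly: "frob q m k = frob_poly (rmod m k)"
  by (simp add: frob_def frob_poly_def)

definition hconj :: "nat \<Rightarrow> 'a poly \<Rightarrow> 'a poly" where
  "hconj m p = bar m (frob_poly p)"

lemma hconj_0 [simp]: "hconj m 0 = 0"
  by (simp add: hconj_def bar_def)

lemma hconj_1 [simp]: "hconj m 1 = 1"
  by (simp add: hconj_def)

lemma hconj_add: "hconj m (p + r) = hconj m p + hconj m r"
  by (simp add: hconj_def frob_poly_add bar_add)

lemma hconj_diff: "hconj m (p - r) = hconj m p - hconj m r"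
  by (simp add: hconj_def frob_poly_diff bar_diff)

lemma hconj_uminus: "hconj m (- p) = - hconj m p"
  using hconj_diff[of m 0 p] by simp

lemma hconj_mult: "hconj m (p * r) = hconj m p * hconj m r"
  by (simp add: hconj_def frob_poly_mult bar_mult)

lemma cong_hconj: "[p = r] (mod xm1 m) \<Longrightarrow> [hconj m p = hconj m r] (mod xm1 m)"
  by (simp add: hconj_def cong_bar cong_frob_poly)

lemma hconj_hconj_cong: "m > 0 \<Longrightarrow> [hconj m (hconj m p) = p] (mod xm1 m)"
  by (simp add: hconj_def frob_poly_bar bar_bar_cong)

lemma frob_conjrev_cong_hconj:
  assumes "m > 0"
  shows "[frob q m (conjrev m v) = hconj m v] (mod xm1 m)"
proof -
  have "[rmod m (conjrev m v) = bar m v] (mod xm1 m)"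
    using conjrev_cong_bar[OF assms] by (simp add: rmod_def)
  then show ?thesis
    unfolding frob_eq_frob_poly hconj_def frob_poly_bar[symmetric] by (rule cong_frob_poly)
qed

lemma herm_ip_cvec:
  assumes "m > 0"
  shows "herm_ip q (cvec m a) (cvec m b) = const_term m (hconj m a * b)"
proof -
  have frob_reduced: "rmod m (frob q m a) = frob q m a"
    by (simp add: frob_eq_frob_poly rmod_def mod_xm1_eq_self degree_mod_xm1_less assms)
  have "herm_ip q (cvec m a) (cvec m b) = (\<Sum>i<m. coeff (rmod m (frob q m a)) i * coeff (b mod xm1 m) i)"
    unfolding frob_reduced by (simp add: herm_ip_def nth_cvec frob_eq_frob_poly rmod_def)
  also have "\<dots> = const_term m (conjrev m (frob q m a) * b)"
    by (rule const_term_conjrev_mult[OF assms, symmetric])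
  also have "\<dots> = const_term m (hconj m a * b)"
  proof (rule const_term_cong, rule cong_scalar_right)
    have "[conjrev m (frob q m a) = hconj m (rmod m a)] (mod xm1 m)"
      using conjrev_cong_bar[OF assms] by (simp add: hconj_def frob_eq_frob_poly)
    moreover have "[hconj m (rmod m a) = hconj m a] (mod xm1 m)"
      by (rule cong_hconj) (simp add: rmod_def)
    ultimately show "[conjrev m (frob q m a) = hconj m a] (mod xm1 m)"
      by (rule cong_trans)
  qed
  finally show ?thesis .
qed

section \<open>The Hermitian dual\<close>

definition dual_pair :: "nat \<Rightarrow> 'a poly \<Rightarrow> 'a poly \<Rightarrow> 'a poly \<Rightarrow> 'a poly \<Rightarrow> 'a poly \<Rightarrow> bool" where
  "dual_pair m g1 g2 v a1 a2 \<longleftrightarrow>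
     xm1 m dvd (hconj m a1 + v * hconj m a2) * g1 \<and> xm1 m dvd (v * hconj m a1 + hconj m a2) * g2"

lemma herm_dual_member_iff:
  assumes m: "m > 0"
  shows "cvec m a1 @ cvec m a2 \<in> herm_dual q (2 * m) (qc_code m g1 (v * g1) (v * g2) g2)
    \<longleftrightarrow> dual_pair m g1 g2 v a1 a2"
proof -
  let ?P1 = "(hconj m a1 + v * hconj m a2) * g1" and ?P2 = "(v * hconj m a1 + hconj m a2) * g2"
  have "herm_ip q (cvec m a1 @ cvec m a2)
      (cvec m (r1 * g1 + r2 * (v * g2)) @ cvec m (r1 * (v * g1) + r2 * g2))
      = const_term m (r1 * ?P1) + const_term m (r2 * ?P2)" (is "?ip r1 r2 = _") for r1 r2
  proof -
    have "hconj m a1 * (r1 * g1 + r2 * (v * g2)) + hconj m a2 * (r1 * (v * g1) + r2 * g2)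
        = r1 * ?P1 + r2 * ?P2"
      by (simp add: algebra_simps)
    then show ?thesis
      by (simp add: herm_ip_append herm_ip_cvec m flip: const_term_add)
  qed
  moreover have "cvec m a1 @ cvec m a2 \<in> herm_dual q (2 * m) (qc_code m g1 (v * g1) (v * g2) g2)
      \<longleftrightarrow> (\<forall>r1 r2. ?ip r1 r2 = 0)"
    unfolding herm_dual_def qc_code_def by auto
  ultimately have "cvec m a1 @ cvec m a2 \<in> herm_dual q (2 * m) (qc_code m g1 (v * g1) (v * g2) g2)
      \<longleftrightarrow> (\<forall>r1 r2. const_term m (r1 * ?P1) + const_term m (r2 * ?P2) = 0)"
    by simp
  also have "\<dots> \<longleftrightarrow> (\<forall>r. const_term m (r * ?P1) = 0) \<and> (\<forall>r. const_term m (r * ?P2) = 0)"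
    by (metis add.right_neutral add_0 mult_zero_left const_term_0)
  also have "\<dots> \<longleftrightarrow> dual_pair m g1 g2 v a1 a2"
    by (simp add: dual_pair_def xm1_dvd_iff_const_term m)
  finally show ?thesis .
qed

lemma herm_dual_subset_qc_code_iff:
  assumes m: "m > 0" and inverse: "[D * (1 - v * v) = 1] (mod xm1 m)"
    and g1: "g1 dvd xm1 m" and g2: "g2 dvd xm1 m"
  shows "herm_dual q (2 * m) (qc_code m g1 (v * g1) (v * g2) g2) \<subseteq> qc_code m g1 (v * g1) (v * g2) g2
    \<longleftrightarrow> (\<forall>a1 a2. dual_pair m g1 g2 v a1 a2 \<longrightarrow> code_pair g1 g2 v a1 a2)"
proof (intro iffI allI impI subsetI)
  fix a1 a2
  assume "herm_dual q (2 * m) (qc_code m g1 (v * g1) (v * g2) g2) \<subseteq> qc_code m g1 (v * g1) (v * g2) g2"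
    and "dual_pair m g1 g2 v a1 a2"
  then show "code_pair g1 g2 v a1 a2"
    using herm_dual_member_iff[OF m] qc_code_member_iff[OF m inverse g1 g2] by blast
next
  fix u
  assume dual_code: "\<forall>a1 a2. dual_pair m g1 g2 v a1 a2 \<longrightarrow> code_pair g1 g2 v a1 a2"
    and u: "u \<in> herm_dual q (2 * m) (qc_code m g1 (v * g1) (v * g2) g2)"
  then have "u = cvec m (Poly (take m u)) @ cvec m (Poly (drop m u))"
    using m by (simp add: herm_dual_def cvec_Poly)
  then show "u \<in> qc_code m g1 (v * g1) (v * g2) g2"
    using u dual_code herm_dual_member_iff[OF m] qc_code_member_iff[OF m inverse g1 g2] by metis
qed

lemma dual_pair_hconj_iff:
  assumes "m > 0"
  shows "dual_pair m g1 g2 v (hconj m c1) (hconj m c2) \<longleftrightarrow>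
    xm1 m dvd (c1 + v * c2) * g1 \<and> xm1 m dvd (v * c1 + c2) * g2"
proof -
  have "[(hconj m (hconj m c1) + v * hconj m (hconj m c2)) * g1 = (c1 + v * c2) * g1] (mod xm1 m)"
    "[(v * hconj m (hconj m c1) + hconj m (hconj m c2)) * g2 = (v * c1 + c2) * g2] (mod xm1 m)"
    using hconj_hconj_cong[OF assms] by (simp_all add: cong_add cong_scalar_left cong_scalar_right)
  then show ?thesis
    unfolding dual_pair_def using cong_dvd_iff by blast
qed

lemma dual_pair_imp_cong_cofactor_mult:
  assumes m: "m > 0" and factor1: "h1 * g1 = xm1 m" and factor2: "h2 * g2 = xm1 m"
    and dual: "dual_pair m g1 g2 v a1 a2"
  obtains \<alpha> \<beta> where
    "[a1 + hconj m v * a2 = hconj m h1 * \<alpha>] (mod xm1 m)"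
    "[hconj m v * a1 + a2 = hconj m h2 * \<beta>] (mod xm1 m)"
proof -
  have "g1 \<noteq> 0" "g2 \<noteq> 0"
    using factor1 factor2 xm1_nonzero[OF m] by auto
  moreover have "h1 * g1 dvd (hconj m a1 + v * hconj m a2) * g1"
    "h2 * g2 dvd (v * hconj m a1 + hconj m a2) * g2"
    using dual by (simp_all add: dual_pair_def factor1 factor2)
  ultimately obtain \<alpha> \<beta> where
    \<alpha>: "hconj m a1 + v * hconj m a2 = h1 * \<alpha>" and
    \<beta>: "v * hconj m a1 + hconj m a2 = h2 * \<beta>"
    by (auto elim!: dvdE)
  have "[a1 + hconj m v * a2 = hconj m (hconj m a1 + v * hconj m a2)] (mod xm1 m)"
    "[hconj m v * a1 + a2 = hconj m (v * hconj m a1 + hconj m a2)] (mod xm1 m)"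
    using hconj_hconj_cong[OF m] by (simp_all add: hconj_add hconj_mult cong_add cong_scalar_left cong_sym)
  then show thesis
    using that[of "hconj m \<alpha>" "hconj m \<beta>"] by (simp add: \<alpha> \<beta> hconj_mult)
qed

lemma dvd_hconj_cofactor_swap:
  assumes m: "m > 0" and factor1: "h1 * g1 = xm1 m" and factor2: "h2 * g2 = xm1 m"
    and self_conj: "[hconj m s = s] (mod xm1 m)"
  shows "g1 dvd hconj m h2 * s \<longleftrightarrow> g2 dvd hconj m h1 * s"
proof -
  have swap: "g' dvd hconj m h * s"
    if factor: "h * g = xm1 m" and factor': "h' * g' = xm1 m" and dvd: "g dvd hconj m h' * s"
    for g h g' h'
  proof -
    have "h \<noteq> 0" "h' \<noteq> 0"
      using factor factor' xm1_nonzero[OF m] by auto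
    have "xm1 m dvd h * (hconj m h' * s)"
      using dvd \<open>h \<noteq> 0\<close> by (simp flip: factor)
    then have "xm1 m dvd hconj m (h * (hconj m h' * s))"
      using cong_hconj[of _ 0 m] by (simp add: cong_0_iff)
    moreover have "[hconj m (h * (hconj m h' * s)) = h' * (hconj m h * s)] (mod xm1 m)"
    proof -
      have "hconj m (h * (hconj m h' * s)) = hconj m (hconj m h') * (hconj m h * hconj m s)"
        by (simp add: hconj_mult ac_simps)
      also have "[\<dots> = h' * (hconj m h * s)] (mod xm1 m)"
        by (intro cong_mult cong_refl hconj_hconj_cong m self_conj)
      finally show ?thesis .
    qed
    ultimately have "xm1 m dvd h' * (hconj m h * s)"
      using cong_dvd_iff by blast
    then show ?thesis
      using \<open>h' \<noteq> 0\<close> by (simp flip: factor')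
  qed
  show ?thesis
    using swap[OF factor1 factor2] swap[OF factor2 factor1] by blast
qed

context
  fixes m :: nat and g1 h1 g2 h2 v D :: "'a poly"
  assumes m_pos: "m > 0" and factor1: "h1 * g1 = xm1 m" and factor2: "h2 * g2 = xm1 m"
    and inverse: "[D * (1 - v * v) = 1] (mod xm1 m)"
begin

lemma hconj_inverse: "[(1 - hconj m v * hconj m v) * hconj m D = 1] (mod xm1 m)"
  using cong_hconj[OF inverse] by (simp add: hconj_mult hconj_diff mult.commute)

text \<open>The map \<open>(c\<^sub>1, c\<^sub>2) \<mapsto> (c\<^sub>1 + v c\<^sub>2, v c\<^sub>1 + c\<^sub>2)\<close> is inverted modulo \<open>x^m - 1\<close> by
  \<open>(c\<^sub>1, c\<^sub>2) \<mapsto> D (c\<^sub>1 - v c\<^sub>2, c\<^sub>2 - v c\<^sub>1)\<close>, so \<open>D (h\<^sub>1, -v h\<^sub>1)\<close> and \<open>D (-v h\<^sub>2, h\<^sub>2)\<close>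
  are the preimages of \<open>(h\<^sub>1, 0)\<close> and \<open>(0, h\<^sub>2)\<close>; their conjugates generate the dual.\<close>

lemma dual_pair_generators:
  "dual_pair m g1 g2 v (hconj m (D * h1)) (hconj m (- (v * D * h1)))"
  "dual_pair m g1 g2 v (hconj m (- (v * D * h2))) (hconj m (D * h2))"
proof -
  have kernel: "xm1 m dvd (D * h - v * (v * (D * h))) * g" if "h * g = xm1 m" for h g
  proof -
    have "(D * h - v * (v * (D * h))) * g = D * (1 - v * v) * (h * g)"
      by (simp add: algebra_simps)
    then show ?thesis
      using that by simp
  qed
  from factor1 factor2 show
    "dual_pair m g1 g2 v (hconj m (D * h1)) (hconj m (- (v * D * h1)))"
    "dual_pair m g1 g2 v (hconj m (- (v * D * h2))) (hconj m (D * h2))"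
    unfolding dual_pair_hconj_iff[OF m_pos]
    by (auto intro: kernel simp: mult.assoc add.commute)
qed

lemma dual_pair_span:
  assumes "dual_pair m g1 g2 v a1 a2"
  obtains \<alpha> \<beta> where
    "[a1 = \<alpha> * hconj m (D * h1) + \<beta> * hconj m (- (v * D * h2))] (mod xm1 m)"
    "[a2 = \<alpha> * hconj m (- (v * D * h1)) + \<beta> * hconj m (D * h2)] (mod xm1 m)"
proof -
  let ?w = "hconj m v" and ?K = "hconj m D"
  obtain \<alpha> \<beta> where
    \<alpha>: "[a1 + ?w * a2 = hconj m h1 * \<alpha>] (mod xm1 m)" and
    \<beta>: "[?w * a1 + a2 = hconj m h2 * \<beta>] (mod xm1 m)"
    using dual_pair_imp_cong_cofactor_mult[OF m_pos factor1 factor2 assms] .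
  have unit: "[a = (1 - ?w * ?w) * ?K * a] (mod xm1 m)" for a
    using cong_scalar_right[OF hconj_inverse, of a] by (simp add: cong_sym)
  have "[a1 = (1 - ?w * ?w) * ?K * a1] (mod xm1 m)"
    by (rule unit)
  also have "(1 - ?w * ?w) * ?K * a1 = ?K * ((a1 + ?w * a2) - ?w * (?w * a1 + a2))"
    by (simp add: algebra_simps)
  also have "[\<dots> = ?K * (hconj m h1 * \<alpha> - ?w * (hconj m h2 * \<beta>))] (mod xm1 m)"
    using \<alpha> \<beta> by (intro cong_scalar_left cong_diff) simp_all
  also have "?K * (hconj m h1 * \<alpha> - ?w * (hconj m h2 * \<beta>))
      = \<alpha> * hconj m (D * h1) + \<beta> * hconj m (- (v * D * h2))"
    by (simp add: hconj_mult hconj_uminus algebra_simps)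
  finally have a1: "[a1 = \<alpha> * hconj m (D * h1) + \<beta> * hconj m (- (v * D * h2))] (mod xm1 m)" .
  have "[a2 = (1 - ?w * ?w) * ?K * a2] (mod xm1 m)"
    by (rule unit)
  also have "(1 - ?w * ?w) * ?K * a2 = ?K * ((?w * a1 + a2) - ?w * (a1 + ?w * a2))"
    by (simp add: algebra_simps)
  also have "[\<dots> = ?K * (hconj m h2 * \<beta> - ?w * (hconj m h1 * \<alpha>))] (mod xm1 m)"
    using \<alpha> \<beta> by (intro cong_scalar_left cong_diff) simp_all
  also have "?K * (hconj m h2 * \<beta> - ?w * (hconj m h1 * \<alpha>))
      = \<alpha> * hconj m (- (v * D * h1)) + \<beta> * hconj m (D * h2)"
    by (simp add: hconj_mult hconj_uminus algebra_simps)
  finally have a2: "[a2 = \<alpha> * hconj m (- (v * D * h1)) + \<beta> * hconj m (D * h2)] (mod xm1 m)" .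
  from a1 a2 show thesis
    by (rule that)
qed

lemma dual_subset_code_iff_generators:
  "(\<forall>a1 a2. dual_pair m g1 g2 v a1 a2 \<longrightarrow> code_pair g1 g2 v a1 a2) \<longleftrightarrow>
    code_pair g1 g2 v (hconj m (D * h1)) (hconj m (- (v * D * h1))) \<and>
    code_pair g1 g2 v (hconj m (- (v * D * h2))) (hconj m (D * h2))"
proof (intro iffI allI impI)
  fix a1 a2
  assume gens: "code_pair g1 g2 v (hconj m (D * h1)) (hconj m (- (v * D * h1))) \<and>
    code_pair g1 g2 v (hconj m (- (v * D * h2))) (hconj m (D * h2))"
    and dual: "dual_pair m g1 g2 v a1 a2"
  obtain \<alpha> \<beta> where
    "[a1 = \<alpha> * hconj m (D * h1) + \<beta> * hconj m (- (v * D * h2))] (mod xm1 m)"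
    "[a2 = \<alpha> * hconj m (- (v * D * h1)) + \<beta> * hconj m (D * h2)] (mod xm1 m)"
    using dual by (rule dual_pair_span)
  moreover have "g1 dvd xm1 m" "g2 dvd xm1 m"
    using factor1 factor2 by (metis dvd_triv_right)+
  ultimately show "code_pair g1 g2 v a1 a2"
    using code_pair_lincomb[of g1 g2 v _ _ _ _ \<alpha> \<beta>] gens code_pair_cong by blast
qed (use dual_pair_generators in blast)+

lemma code_pair_generators_iff:
  "code_pair g1 g2 v (hconj m (D * h1)) (hconj m (- (v * D * h1))) \<and>
   code_pair g1 g2 v (hconj m (- (v * D * h2))) (hconj m (D * h2)) \<longleftrightarrow>
   g1 dvd hconj m h1 * (1 + v * hconj m v) \<and> g1 dvd hconj m h2 * (hconj m v + v) \<and>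
   g2 dvd hconj m h2 * (1 + v * hconj m v)"
proof -
  let ?w = "hconj m v" and ?K = "hconj m D"
  have "g1 dvd xm1 m" "g2 dvd xm1 m"
    using factor1 factor2 by (metis dvd_triv_right)+
  then have cancel: "g1 dvd ?K * y \<longleftrightarrow> g1 dvd y" "g2 dvd ?K * y \<longleftrightarrow> g2 dvd y" for y
    using dvd_mult_cancel_cong_unit[OF hconj_inverse] by blast+
  have "hconj m (D * h) - v * hconj m (- (v * D * h)) = ?K * (hconj m h * (1 + v * ?w))"
    "hconj m (- (v * D * h)) - v * hconj m (D * h) = - (?K * (hconj m h * (?w + v)))" for h
    by (simp_all add: hconj_mult hconj_uminus algebra_simps)
  then have "code_pair g1 g2 v (hconj m (D * h1)) (hconj m (- (v * D * h1))) \<longleftrightarrow>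
      g1 dvd hconj m h1 * (1 + v * ?w) \<and> g2 dvd hconj m h1 * (?w + v)"
    "code_pair g1 g2 v (hconj m (- (v * D * h2))) (hconj m (D * h2)) \<longleftrightarrow>
      g1 dvd hconj m h2 * (?w + v) \<and> g2 dvd hconj m h2 * (1 + v * ?w)"
    by (simp_all add: code_pair_def cancel)
  moreover have "[hconj m (hconj m v) + ?w = v + ?w] (mod xm1 m)"
    by (intro cong_add hconj_hconj_cong m_pos cong_refl)
  then have "[hconj m (?w + v) = ?w + v] (mod xm1 m)"
    by (simp add: hconj_add add.commute)
  then have "g2 dvd hconj m h1 * (?w + v) \<longleftrightarrow> g1 dvd hconj m h2 * (?w + v)"
    using dvd_hconj_cofactor_swap[OF m_pos factor1 factor2] by blast
  ultimately show ?thesis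
    by blast
qed

end

section \<open>The polynomial \<open>g\<^sup>\<perp>\<^sup>H\<close>\<close>

lemma gcd_rmod_frob:
  assumes m: "m > 0" and monic: "lead_coeff g = 1" and g: "g dvd xm1 m"
  shows "gcd (rmod m (frob q m g)) (xm1 m) = frob_poly g"
proof -
  have "gcd (rmod m (frob q m g)) (xm1 m) = gcd (frob_poly g) (xm1 m)"
    by (simp add: frob_eq_frob_poly rmod_def frob_poly_mod_xm1 xm1_nonzero m)
  also have "\<dots> = normalize (frob_poly g)"
    using g by (metis frob_poly_dvd_iff frob_poly_xm1 gcd_proj1_if_dvd)
  also have "\<dots> = frob_poly g"
    using monic by (simp add: normalize_poly_eq_map_poly)
  finally show ?thesis .
qed

lemma perpH_cong_hconj:
  assumes m: "m > 0" and monic: "lead_coeff g = 1" and g: "g dvd xm1 m"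
  obtains c where "c \<noteq> 0"
    and "[perpH q m g = smult c (monom 1 (degree (xm1 m div g)) * hconj m (xm1 m div g))] (mod xm1 m)"
proof -
  let ?f = "frob_poly (xm1 m div g)"
  have factor: "xm1 m = frob_poly g * ?f"
    using g by (metis dvd_mult_div_cancel frob_poly_mult frob_poly_xm1)
  moreover have "frob_poly g \<noteq> 0"
    using monic by auto
  ultimately have "xm1 m div frob_poly g = ?f"
    by (metis nonzero_mult_div_cancel_left)
  then have perpH: "perpH q m g = smult (inverse (coeff ?f 0)) (reflect_poly ?f)"
    by (simp add: perpH_def perp_def gcd_rmod_frob[OF assms])
  have "coeff (frob_poly g) 0 * coeff ?f 0 = -1"
    using coeff_0_xm1[OF m] factor by (metis coeff_mult_0)
  then have "inverse (coeff ?f 0) \<noteq> 0"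
    by (auto simp del: coeff_frob_poly)
  moreover have "[perpH q m g = smult (inverse (coeff ?f 0)) (monom 1 (degree (xm1 m div g)) * hconj m (xm1 m div g))] (mod xm1 m)"
    unfolding perpH hconj_def
    using reflect_poly_cong_bar[OF m, of ?f] by (simp add: cong_smult)
  ultimately show thesis
    by (rule that)
qed

lemma dvd_rmod_perpH_mult_iff:
  assumes m: "m > 0" and monic: "lead_coeff g' = 1" and g': "g' dvd xm1 m" and g: "g dvd xm1 m"
    and e: "[e = e'] (mod xm1 m)"
  shows "g dvd rmod m (perpH q m g' * e) \<longleftrightarrow> g dvd hconj m (xm1 m div g') * e'"
proof -
  let ?d = "degree (xm1 m div g')"
  obtain c where "c \<noteq> 0"
    and perpH: "[perpH q m g' = smult c (monom 1 ?d * hconj m (xm1 m div g'))] (mod xm1 m)"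
    using perpH_cong_hconj[OF m monic g'] .
  have "[rmod m (perpH q m g' * e) = smult c (monom 1 ?d * (hconj m (xm1 m div g') * e'))] (mod xm1 m)"
    using cong_mult[OF perpH e] by (simp add: rmod_def mult.assoc)
  then have "g dvd rmod m (perpH q m g' * e) \<longleftrightarrow> g dvd smult c (monom 1 ?d * (hconj m (xm1 m div g') * e'))"
    using cong_dvd_iff_of_dvd_modulus g by blast
  also have "\<dots> \<longleftrightarrow> g dvd monom 1 ?d * (hconj m (xm1 m div g') * e')"
    using \<open>c \<noteq> 0\<close> by (rule dvd_smult_iff)
  also have "\<dots> \<longleftrightarrow> g dvd hconj m (xm1 m div g') * e'"
    using dvd_mult_cancel_cong_unit[OF monom_inverse_cong[OF m] g] .
  finally show ?thesis .
qed

end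

section \<open>The Frobenius of a field of order \<open>q\<^sup>2\<close>\<close>

lemma of_nat_card_UNIV_eq_0: "of_nat (card (UNIV :: 'a::{finite,comm_ring_1} set)) = (0 :: 'a)"
proof -
  have "(\<Sum>x\<in>(UNIV :: 'a set). x + 1) = (\<Sum>x\<in>UNIV. x)"
    by (rule sum.reindex_bij_witness[of _ "\<lambda>x. x - 1" "\<lambda>x. x + 1"]) auto
  then show ?thesis
    by (simp add: sum.distrib)
qed

lemma power_card_UNIV_eq_self: "(c :: 'a::{finite,field}) ^ card (UNIV :: 'a set) = c"
proof (cases "c = 0")
  case False
  let ?S = "UNIV - {0 :: 'a}"
  have "(\<Prod>x\<in>?S. c * x) = (\<Prod>x\<in>?S. x)"
    by (rule prod.reindex_bij_witness[of _ "\<lambda>x. x / c" "\<lambda>x. c * x"]) (use False in auto)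
  then have "c ^ card ?S = 1"
    by (simp add: prod.distrib)
  moreover have "card (UNIV :: 'a set) = Suc (card ?S)"
    using finite_UNIV_card_ge_0[where 'a = 'a] by (simp add: card_Diff_singleton)
  ultimately show ?thesis
    by (metis power_Suc mult_1_right)
qed (simp add: finite_UNIV_card_ge_0 zero_power)

lemma involutive_frobenius_if_card_eq_square:
  assumes "prime_power q" and card: "card (UNIV :: 'a::{finite,field_gcd} set) = q ^ 2"
  shows "involutive_frobenius TYPE('a) q"
proof
  obtain p k where p: "prime p" and "k > 0" and q: "q = p ^ k"
    using assms(1) unfolding prime_power_def by blast
  have char: "prime CHAR('a)"
    by (rule prime_CHAR_semidom) (simp add: finite_imp_CHAR_pos)
  have "CHAR('a) dvd card (UNIV :: 'a set)"
    using of_nat_card_UNIV_eq_0 of_nat_eq_0_iff_char_dvd by blast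
  then have "CHAR('a) dvd p ^ (k * 2)"
    using card q by (simp add: power_mult)
  then have "CHAR('a) = p"
    using char p by (metis prime_dvd_power primes_dvd_imp_eq)
  then show "(x + y :: 'a) ^ q = x ^ q + y ^ q" for x y
    using char q freshmans_dream' by blast
  show "(x ^ q) ^ q = x" for x :: 'a
    using power_card_UNIV_eq_self[of x] card by (simp flip: power_mult add: power2_eq_square)
qed

theorem mainTheorem12:
  fixes q m :: nat and g1 g2 v :: "'a::{finite,field_gcd} poly"
  assumes "prime_power q" and "card (UNIV :: 'a set) = q ^ 2" and "m > 0"
    and "lead_coeff g1 = 1" and "g1 dvd xm1 m" and "lead_coeff g2 = 1" and "g2 dvd xm1 m"
    and "degree v < m"
    and "gcd (v ^ 2 - 1) (xm1 m) = 1"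
  shows "herm_dual q (2 * m) (qc_code m g1 (v * g1) (v * g2) g2)
           \<subseteq> qc_code m g1 (v * g1) (v * g2) g2
         \<longleftrightarrow>
         g1 dvd rmod m (perpH q m g1 * (1 + v * frob q m (conjrev m v))) \<and>
         g1 dvd rmod m (perpH q m g2 * (frob q m (conjrev m v) + v)) \<and>
         g2 dvd rmod m (perpH q m g2 * (1 + v * frob q m (conjrev m v)))"
proof -
  interpret involutive_frobenius "TYPE('a)" q
    using assms(1,2) by (rule involutive_frobenius_if_card_eq_square)
  obtain b where "[b * (v ^ 2 - 1) = 1] (mod xm1 m)"
    using assms(9) by (rule cong_inverse_of_gcd_eq_1)
  then have inverse: "[(- b) * (1 - v * v) = 1] (mod xm1 m)"
    by (simp add: power2_eq_square algebra_simps)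
  have factor1: "(xm1 m div g1) * g1 = xm1 m" and factor2: "(xm1 m div g2) * g2 = xm1 m"
    using assms(5,7) by simp_all
  have e1: "[1 + v * frob q m (conjrev m v) = 1 + v * hconj m v] (mod xm1 m)"
    and e2: "[frob q m (conjrev m v) + v = hconj m v + v] (mod xm1 m)"
    using frob_conjrev_cong_hconj[OF assms(3)] by (simp_all add: cong_add cong_scalar_left)
  show ?thesis
    unfolding herm_dual_subset_qc_code_iff[OF assms(3) inverse assms(5,7)]
      dual_subset_code_iff_generators[OF assms(3) factor1 factor2 inverse]
      code_pair_generators_iff[OF assms(3) factor1 factor2 inverse]
      dvd_rmod_perpH_mult_iff[OF assms(3) assms(4,5) assms(5) e1]
      dvd_rmod_perpH_mult_iff[OF assms(3) assms(6,7) assms(5) e2]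
      dvd_rmod_perpH_mult_iff[OF assms(3) assms(6,7) assms(7) e1] ..
qed

end
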